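(* Let $\mathbf N^{(1,0,0)}=E^{(1,0,0)}\mathbf B^{(1,0,0)}$, $\mathbf N^{(0,1,0)}=E^{(0,1,0)}\mathbf B^{(0,1,0)}$, $\mathbf N^{(0,0,1)}=E^{(0,0,1)}\mathbf B^{(0,0,1)}$ be the collections of $n_1$ functions on $\Omega=[0,R]\times[0,S]\times[0,T]$ defined in the context. Then the non-zero functions in $\mathbf N^{(1,0,0)}$ are linearly independent, and likewise the non-zero functions in $\mathbf N^{(0,1,0)}$, and those in $\mathbf N^{(0,0,1)}$.
   Context: Univariate splines. For a degree $p\ge1$ and an open knot vector $\mathbf t=(t_1,\dots,t_{m+p+1})$ with B-splines $B^p_1,\dots,B^p_m$ spanning a $C^1$ space, define $D^p_j=\frac{p}{t_{j+p+1}-t_{j+1}}B^{p-1}_{j+1}$, $j=1,\dots,m-1$ ($B^{p-1}$ the degree $p-1$ B-splines on $(t_2,\dots,t_{m+p})$). Periodic version: with $(c_1,c_2)=\frac{(t_{m+p+1}-t_m,\,t_{p+2}-t_1)}{t_{m+p+1}-t_m+t_{p+2}-t_1}$, $H^{(0)}=[\mathbf c|I_{m-2}|\mathbf c]$, $\mathbf c=(c_1,0,\dots,0,c_2)^T$, and $H^{(1)}$ the $(m-2)\times(m-1)$ matrix with first $m-3$ rows $[0|I_{m-3}|0]$ and last row $(c_2,0,\dots,0,c_1)$, the periodic basis is $H^{(0)}(B^p_1,\dots,B^p_m)^T$ and the periodic derivative functions are $H^{(1)}(D^p_1,\dots,D^p_{m-1})^T$. Let $\mathbb S^{p^r}$ (on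 $[0,R]$) and $\mathbb S^{p^t}$ (on $[0,T]$) be $C^1$ periodic spaces of this kind with bases $B^{p^r}_1,\dots,B^{p^r}_{n^r}$, $B^{p^t}_1,\dots,B^{p^t}_{n^t}$ and periodic derivative functions $D^{p^r}_1,\dots,D^{p^r}_{n^r}$, $D^{p^t}_1,\dots,D^{p^t}_{n^t}$; let $\mathbb S^{p^s}$ on $[0,S]$ be a non-periodic $C^1$ spline space with B-splines $B^{p^s}_1,\dots,B^{p^s}_{n^s}$ and $D^{p^s}_1,\dots,D^{p^s}_{n^s-1}$. Vectorizations (index $i$ fastest, then $j$, then $k$): $\mathbf B^{(1,0,0)}=(D^{p^r}_iB^{p^s}_jB^{p^t}_k)_{i\le n^r,j\le n^s,k\le n^t}$, $\mathbf B^{(0,1,0)}=(B^{p^r}_iD^{p^s}_jB^{p^t}_k)_{i\le n^r,j\le n^s-1,k\le n^t}$, $\mathbf B^{(0,0,1)}=(B^{p^r}_iB^{p^s}_jD^{p^t}_k)_{i\le n^r,j\le n^s,k\le n^t}$. Matrices. $\bar n_0=n^r(n^s-2)+3$, $\bar n_1=2n^r(n^s-2)+2$, $n_1=n^t(\bar n_0+\bar n_1)$, $\theta_i=2\pi+\frac{(1-2i)\pi}{n^r}$. $\bar E$ is $3\times2n^r$ with columns $(1,1),\dots,(n^r,1),(1,2),\dots,(n^r,2)$, $\bar E_{\ell,(i,1)}=\frac13$, $\bar E_{1,(i,2)}=\frac13+\frac13\cos\theta_i$, $\bar E_{2,(i,2)}=\frac13-\frac16\cos\theta_i+\frac{\sqrt3}6\sin\theta_i$,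 $\bar E_{3,(i,2)}=\frac13-\frac16\cos\theta_i-\frac{\sqrt3}6\sin\theta_i$, $\bar E_{\ell,(n^r+1,2)}:=\bar E_{\ell,(1,2)}$. $E^{(0)}=\begin{bmatrix}\bar E&0\\0&I_{n^r(n^s-2)}\end{bmatrix}$ ($\bar n_0\times n^rn^s$). $E^{(1,0)}$ ($\bar n_1\times n^rn^s$): $y=E^{(1,0)}x$ has $y_\ell=\sum_{i=1}^{n^r}(\bar E_{\ell+1,(i+1,2)}-\bar E_{\ell+1,(i,2)})x_{i+n^r}$ ($\ell=1,2$) and, for $j=3,\dots,n^s$, $i=1,\dots,n^r$, $y_{2+i+(2j-6)n^r}=0$, $y_{2+i+(2j-5)n^r}=x_{i+(j-1)n^r}$. $E^{(0,1)}$ ($\bar n_1\times n^r(n^s-1)$): $y=E^{(0,1)}x$ has $y_\ell=\sum_{i=1}^{n^r}(\bar E_{\ell+1,(i,2)}-\bar E_{\ell+1,(i,1)})x_i$ ($\ell=1,2$) and, for $j=2,\dots,n^s-1$, $i=1,\dots,n^r$, $y_{2+i+(2j-4)n^r}=x_{i+(j-1)n^r}$, $y_{2+i+(2j-3)n^r}=0$. With $[A;B]$ vertical stacking: $E^{(1,0,0)}=I_{n^t}\otimes[E^{(1,0)};0_{\bar n_0\times n^rn^s}]$, $E^{(0,1,0)}=I_{n^t}\otimes[E^{(0,1)};0_{\bar n_0\times n^r(n^s-1)}]$, $E^{(0,0,1)}=I_{n^t}\otimes[0_{\bar n_1\times n^rn^s};E^{(0)}]$. *)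

theory Defs
  imports Complex_Main
begin

definition kn :: "real list \<Rightarrow> nat \<Rightarrow> real" where
  "kn t i = t ! (i - 1)"

text \<open>Degree-0 B-splines are indicators of [t_j, t_(j+1)); the last non-empty interval is
  closed at the right end of the knot vector (standard convention). Higher degrees via
  the Cox--de Boor recursion, with the convention 0/0 = 0 (Isabelle's x / 0 = 0).\<close>
fun bspl :: "real list \<Rightarrow> nat \<Rightarrow> nat \<Rightarrow> real \<Rightarrow> real" where
  "bspl t 0 j x =
     (if (kn t j \<le> x \<and> x < kn t (j+1)) \<or>
         (kn t j < kn t (j+1) \<and> x = kn t (j+1) \<and> x = last t) then 1 else 0)"
| "bspl t (Suc p) j x =
     (x - kn t j) / (kn t (j+p+1) - kn t j) * bspl t p j x
     + (kn t (j+p+2) - x) / (kn t (j+p+2) - kn t (j+1)) * bspl t p (j+1) x"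

text \<open>D^p_j = p/(t_(j+p+1) - t_(j+1)) B^(p-1)_(j+1), where B^(p-1)_(j+1) is the degree p-1
  B-spline on the knots t_(j+1), ..., t_(j+p+1) (these are the knots of (t_2, ..., t_(m+p))).\<close>
definition dspl :: "real list \<Rightarrow> nat \<Rightarrow> nat \<Rightarrow> real \<Rightarrow> real" where
  "dspl t p j x = real p / (kn t (j+p+1) - kn t (j+1)) * bspl t (p - 1) (j+1) x"

definition knot_mult :: "real list \<Rightarrow> real \<Rightarrow> nat" where
  "knot_mult t y = card {k \<in> {1..length t}. kn t k = y}"

text \<open>Open knot vector of degree p with m B-splines on [a,b], spanning a C^1 space
  (interior knots have multiplicity at most p-1).\<close>
definition open_C1_knots :: "real list \<Rightarrow> nat \<Rightarrow> nat \<Rightarrow> real \<Rightarrow> real \<Rightarrow> bool" where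
  "open_C1_knots t p m a b \<longleftrightarrow>
     1 \<le> p \<and> length t = m + p + 1 \<and> sorted t \<and> a < b \<and>
     (\<forall>i\<in>{1..p+1}. kn t i = a) \<and> (\<forall>i\<in>{m+1..m+p+1}. kn t i = b) \<and>
     (\<forall>i\<in>{p+2..m}. knot_mult t (kn t i) \<le> p - 1)"

definition per_c1 :: "real list \<Rightarrow> nat \<Rightarrow> nat \<Rightarrow> real" where
  "per_c1 t p m = (kn t (m+p+1) - kn t m) /
     (kn t (m+p+1) - kn t m + kn t (p+2) - kn t 1)"

definition per_c2 :: "real list \<Rightarrow> nat \<Rightarrow> nat \<Rightarrow> real" where
  "per_c2 t p m = (kn t (p+2) - kn t 1) /
     (kn t (m+p+1) - kn t m + kn t (p+2) - kn t 1)"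

definition per_cvec :: "real list \<Rightarrow> nat \<Rightarrow> nat \<Rightarrow> nat \<Rightarrow> real" where
  "per_cvec t p m i = (if i = 1 then per_c1 t p m else if i = m - 2 then per_c2 t p m else 0)"

definition H0 :: "real list \<Rightarrow> nat \<Rightarrow> nat \<Rightarrow> nat \<Rightarrow> nat \<Rightarrow> real" where
  "H0 t p m i l = (if l = 1 \<or> l = m then per_cvec t p m i else if l = i + 1 then 1 else 0)"

definition H1 :: "real list \<Rightarrow> nat \<Rightarrow> nat \<Rightarrow> nat \<Rightarrow> nat \<Rightarrow> real" where
  "H1 t p m i l =
     (if i = m - 2 then (if l = 1 then per_c2 t p m else if l = m - 1 then per_c1 t p m else 0)
      else if l = i + 1 then 1 else 0)"

definition per_B :: "real list \<Rightarrow> nat \<Rightarrow> nat \<Rightarrow> nat \<Rightarrow> real \<Rightarrow> real" where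
  "per_B t p m i x = (\<Sum>l = 1..m. H0 t p m i l * bspl t p l x)"

definition per_D :: "real list \<Rightarrow> nat \<Rightarrow> nat \<Rightarrow> nat \<Rightarrow> real \<Rightarrow> real" where
  "per_D t p m i x = (\<Sum>l = 1..m-1. H1 t p m i l * dspl t p l x)"

definition idm :: "nat \<Rightarrow> nat \<Rightarrow> real" where
  "idm a b = (if a = b then 1 else 0)"

definition kron :: "nat \<Rightarrow> nat \<Rightarrow> (nat \<Rightarrow> nat \<Rightarrow> real) \<Rightarrow> (nat \<Rightarrow> nat \<Rightarrow> real) \<Rightarrow> nat \<Rightarrow> nat \<Rightarrow> real" where
  "kron rB cB A B a b =
     A ((a - 1) div rB + 1) ((b - 1) div cB + 1) * B ((a - 1) mod rB + 1) ((b - 1) mod cB + 1)"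

definition vstack :: "nat \<Rightarrow> (nat \<Rightarrow> nat \<Rightarrow> real) \<Rightarrow> (nat \<Rightarrow> nat \<Rightarrow> real) \<Rightarrow> nat \<Rightarrow> nat \<Rightarrow> real" where
  "vstack rA A B a b = (if a \<le> rA then A a b else B (a - rA) b)"

definition zerom :: "nat \<Rightarrow> nat \<Rightarrow> real" where
  "zerom a b = 0"

definition matfun :: "nat \<Rightarrow> (nat \<Rightarrow> nat \<Rightarrow> real) \<Rightarrow> (nat \<Rightarrow> 'x \<Rightarrow> real) \<Rightarrow> nat \<Rightarrow> 'x \<Rightarrow> real" where
  "matfun ncols M v a x = (\<Sum>b = 1..ncols. M a b * v b x)"

definition vec3 :: "nat \<Rightarrow> nat \<Rightarrow> (nat \<Rightarrow> nat \<Rightarrow> nat \<Rightarrow> 'y) \<Rightarrow> nat \<Rightarrow> 'y" where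
  "vec3 n1 n2 f a = f ((a - 1) mod n1 + 1) ((a - 1) div n1 mod n2 + 1) ((a - 1) div (n1 * n2) + 1)"

definition theta :: "nat \<Rightarrow> nat \<Rightarrow> real" where
  "theta nr i = 2 * pi + (1 - 2 * real i) * pi / real nr"

definition Ebar_e :: "nat \<Rightarrow> nat \<Rightarrow> nat \<Rightarrow> nat \<Rightarrow> real" where
  "Ebar_e nr l i s =
     (let i' = (if i = nr + 1 then 1 else i); th = theta nr i' in
      if s = 1 then 1/3
      else if l = 1 then 1/3 + 1/3 * cos th
      else if l = 2 then 1/3 - 1/6 * cos th + sqrt 3 / 6 * sin th
      else 1/3 - 1/6 * cos th - sqrt 3 / 6 * sin th)"

definition Ebar :: "nat \<Rightarrow> nat \<Rightarrow> nat \<Rightarrow> real" where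
  "Ebar nr l c = (if c \<le> nr then Ebar_e nr l c 1 else Ebar_e nr l (c - nr) 2)"

definition nbar0 :: "nat \<Rightarrow> nat \<Rightarrow> nat" where
  "nbar0 nr ns = nr * (ns - 2) + 3"

definition nbar1 :: "nat \<Rightarrow> nat \<Rightarrow> nat" where
  "nbar1 nr ns = 2 * nr * (ns - 2) + 2"

definition E0 :: "nat \<Rightarrow> nat \<Rightarrow> nat \<Rightarrow> real" where
  "E0 nr a b =
     (if a \<le> 3 \<and> b \<le> 2 * nr then Ebar nr a b
      else if 3 < a \<and> 2 * nr < b then idm (a - 3) (b - 2 * nr) else 0)"

definition E10 :: "nat \<Rightarrow> nat \<Rightarrow> nat \<Rightarrow> nat \<Rightarrow> real" where
  "E10 nr ns a b =
     (if a \<in> {1, 2} then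
        (if nr < b \<and> b \<le> 2 * nr
         then Ebar_e nr (a + 1) (b - nr + 1) 2 - Ebar_e nr (a + 1) (b - nr) 2 else 0)
      else if (\<exists>j i. 3 \<le> j \<and> j \<le> ns \<and> 1 \<le> i \<and> i \<le> nr \<and>
                      a = 2 + i + (2 * j - 5) * nr \<and> b = i + (j - 1) * nr) then 1
      else 0)"

definition E01 :: "nat \<Rightarrow> nat \<Rightarrow> nat \<Rightarrow> nat \<Rightarrow> real" where
  "E01 nr ns a b =
     (if a \<in> {1, 2} then
        (if 1 \<le> b \<and> b \<le> nr then Ebar_e nr (a + 1) b 2 - Ebar_e nr (a + 1) b 1 else 0)
      else if (\<exists>j i. 2 \<le> j \<and> j \<le> ns - 1 \<and> 1 \<le> i \<and> i \<le> nr \<and>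
                      a = 2 + i + (2 * j - 4) * nr \<and> b = i + (j - 1) * nr) then 1
      else 0)"

definition E100 :: "nat \<Rightarrow> nat \<Rightarrow> nat \<Rightarrow> nat \<Rightarrow> real" where
  "E100 nr ns = kron (nbar1 nr ns + nbar0 nr ns) (nr * ns) idm
                  (vstack (nbar1 nr ns) (E10 nr ns) zerom)"

definition E010 :: "nat \<Rightarrow> nat \<Rightarrow> nat \<Rightarrow> nat \<Rightarrow> real" where
  "E010 nr ns = kron (nbar1 nr ns + nbar0 nr ns) (nr * (ns - 1)) idm
                  (vstack (nbar1 nr ns) (E01 nr ns) zerom)"

definition E001 :: "nat \<Rightarrow> nat \<Rightarrow> nat \<Rightarrow> nat \<Rightarrow> real" where
  "E001 nr ns = kron (nbar1 nr ns + nbar0 nr ns) (nr * ns) idm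
                  (vstack (nbar1 nr ns) zerom (E0 nr))"

definition nonzero_lin_indep :: "'x set \<Rightarrow> nat \<Rightarrow> (nat \<Rightarrow> 'x \<Rightarrow> real) \<Rightarrow> bool" where
  "nonzero_lin_indep \<Omega> n N \<longleftrightarrow>
     (let Z = {a \<in> {1..n}. \<exists>x\<in>\<Omega>. N a x \<noteq> 0} in
      \<forall>c :: nat \<Rightarrow> real. (\<forall>x\<in>\<Omega>. (\<Sum>a\<in>Z. c a * N a x) = 0) \<longrightarrow> (\<forall>a\<in>Z. c a = 0))"

end

theory Submission
  imports Defs "HOL-Library.Function_Algebras" "HOL-Computational_Algebra.Polynomial"
begin

text \<open>
  The univariate families are linearly independent on their intervals: on a non-degenerate knot
  span the \<open>q + 1\<close> B-splines of degree \<open>q\<close> active there reproduce every polynomial of degree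
  at most \<open>q\<close> (Marsden's identity), so they are independent on that span; the \<open>C\<^sup>1\<close> condition
  guarantees that each B-spline of degree \<open>p\<close> or \<open>p - 1\<close> is active on such a span inside the
  interval, and the \<open>D\<^sub>j\<close> are rescaled B-splines of degree \<open>p - 1\<close>.  The periodic families are
  images under \<open>H\<^sup>(\<^sup>0\<^sup>)\<close> and \<open>H\<^sup>(\<^sup>1\<^sup>)\<close>, whose rows are independent.  Tensor products and
  vectorisation preserve independence.

  If a family \<open>v\<close> is independent and the non-zero rows of \<open>M\<close> are independent, then the
  non-zero members of \<open>M v\<close> are independent.  For \<open>I \<otimes> [A; 0]\<close> and \<open>I \<otimes> [0; A]\<close> this property
  is inherited from \<open>A\<close>.  In \<open>E\<^sup>(\<^sup>1\<^sup>,\<^sup>0\<^sup>)\<close>, \<open>E\<^sup>(\<^sup>0\<^sup>,\<^sup>1\<^sup>)\<close> and \<open>E\<^sup>(\<^sup>0\<^sup>)\<close> every non-zero row below the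
  first two (resp. three) is a unit row whose column no other row uses, and the first rows are
  independent by a trigonometric computation at \<open>\<theta>\<^sub>1\<close>, \<open>\<theta>\<^sub>2\<close> and \<open>\<theta>\<^sub>n\<^sub>r\<close>.
\<close>

section \<open>Linear independence of families of functions\<close>

definition lin_indep_on :: "'x set \<Rightarrow> 'i set \<Rightarrow> ('i \<Rightarrow> 'x \<Rightarrow> real) \<Rightarrow> bool" where
  "lin_indep_on X I f \<longleftrightarrow> (\<forall>c. (\<forall>x\<in>X. (\<Sum>i\<in>I. c i * f i x) = 0) \<longrightarrow> (\<forall>i\<in>I. c i = 0))"

lemma lin_indep_on_cong:
  assumes "\<And>i x. i \<in> I \<Longrightarrow> x \<in> X \<Longrightarrow> f i x = g i x"
  shows "lin_indep_on X I f \<longleftrightarrow> lin_indep_on X I g"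
  unfolding lin_indep_on_def using assms by (simp cong: sum.cong)

lemma lin_indep_on_subset:
  assumes indep: "lin_indep_on X I f" and J: "J \<subseteq> I" "finite I"
  shows "lin_indep_on X J f"
  unfolding lin_indep_on_def
proof (intro allI impI)
  fix c assume zero: "\<forall>x\<in>X. (\<Sum>i\<in>J. c i * f i x) = 0"
  define c' where "c' i = (if i \<in> J then c i else 0)" for i
  have "(\<Sum>i\<in>I. c' i * f i x) = (\<Sum>i\<in>J. c i * f i x)" for x
  proof -
    have "(\<Sum>i\<in>I. c' i * f i x) = (\<Sum>i\<in>J. c' i * f i x)"
      using J by (intro sum.mono_neutral_right) (auto simp: c'_def)
    then show ?thesis by (simp add: c'_def)
  qed
  then have "\<forall>i\<in>I. c' i = 0" using indep zero unfolding lin_indep_on_def by simp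
  then show "\<forall>i\<in>J. c i = 0" using J(1) unfolding c'_def by (metis subsetD)
qed

lemma lin_indep_on_reindex:
  assumes h: "bij_betw h I J" and indep: "lin_indep_on X J f"
  shows "lin_indep_on X I (\<lambda>i. f (h i))"
  unfolding lin_indep_on_def
proof (intro allI impI ballI)
  fix c i
  assume zero: "\<forall>x\<in>X. (\<Sum>i\<in>I. c i * f (h i) x) = 0" and i: "i \<in> I"
  define c' where "c' = c \<circ> inv_into I h"
  have c'_h: "c' (h i) = c i" if "i \<in> I" for i
    using h that by (simp add: c'_def bij_betw_inv_into_left)
  have "(\<Sum>j\<in>J. c' j * f j x) = (\<Sum>i\<in>I. c i * f (h i) x)" for x
    using sum.reindex_bij_betw[OF h, of "\<lambda>j. c' j * f j x"] c'_h by simp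
  then have "\<forall>j\<in>J. c' j = 0" using indep zero unfolding lin_indep_on_def by simp
  then show "c i = 0" using i h c'_h bij_betw_apply by fastforce
qed

lemma lin_indep_on_scale:
  assumes indep: "lin_indep_on X I f" and nz: "\<And>i. i \<in> I \<Longrightarrow> \<kappa> i \<noteq> 0"
  shows "lin_indep_on X I (\<lambda>i x. \<kappa> i * f i x)"
  unfolding lin_indep_on_def
proof (intro allI impI)
  fix c assume "\<forall>x\<in>X. (\<Sum>i\<in>I. c i * (\<kappa> i * f i x)) = 0"
  then have "\<forall>x\<in>X. (\<Sum>i\<in>I. (c i * \<kappa> i) * f i x) = 0" by (simp add: mult.assoc)
  then show "\<forall>i\<in>I. c i = 0" using indep nz unfolding lin_indep_on_def by fastforce
qed

lemma lin_indep_on_matrix_combination: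
  assumes rows: "lin_indep_on L I H" and indep: "lin_indep_on X L f"
  shows "lin_indep_on X I (\<lambda>i x. \<Sum>l\<in>L. H i l * f l x)"
  unfolding lin_indep_on_def
proof (intro allI impI)
  fix c assume zero: "\<forall>x\<in>X. (\<Sum>i\<in>I. c i * (\<Sum>l\<in>L. H i l * f l x)) = 0"
  have "(\<Sum>l\<in>L. (\<Sum>i\<in>I. c i * H i l) * f l x) = (\<Sum>i\<in>I. c i * (\<Sum>l\<in>L. H i l * f l x))" for x
    by (simp add: sum_distrib_left sum_distrib_right mult_ac sum.swap[of _ L])
  then have "\<forall>l\<in>L. (\<Sum>i\<in>I. c i * H i l) = 0"
    using indep[unfolded lin_indep_on_def, THEN spec[of _ "\<lambda>l. \<Sum>i\<in>I. c i * H i l"]] zero by simp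
  then show "\<forall>i\<in>I. c i = 0" using rows unfolding lin_indep_on_def by blast
qed

lemma lin_indep_on_isolating_columns:
  assumes fin: "finite I" and head: "lin_indep_on L (I \<inter> Hd) M"
    and isolated: "\<And>i. i \<in> I - Hd \<Longrightarrow> \<exists>l\<in>L. M i l \<noteq> 0 \<and> (\<forall>i'\<in>I. i' \<noteq> i \<longrightarrow> M i' l = 0)"
  shows "lin_indep_on L I M"
  unfolding lin_indep_on_def
proof (intro allI impI)
  fix c assume zero: "\<forall>l\<in>L. (\<Sum>i\<in>I. c i * M i l) = 0"
  have rest: "c i = 0" if i: "i \<in> I - Hd" for i
  proof -
    obtain l where l: "l \<in> L" "M i l \<noteq> 0" "\<forall>i'\<in>I. i' \<noteq> i \<longrightarrow> M i' l = 0"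
      using isolated[OF i] by blast
    have "(\<Sum>i'\<in>I. c i' * M i' l) = c i * M i l + (\<Sum>i'\<in>I - {i}. c i' * M i' l)"
      using fin i by (intro sum.remove) auto
    also have "(\<Sum>i'\<in>I - {i}. c i' * M i' l) = 0"
      using l(3) by (intro sum.neutral) auto
    finally show ?thesis using zero l by simp
  qed
  have "(\<Sum>i\<in>I \<inter> Hd. c i * M i l) = (\<Sum>i\<in>I. c i * M i l)" for l
    using fin rest by (intro sum.mono_neutral_left) auto
  then have "\<forall>i\<in>I \<inter> Hd. c i = 0" using head zero unfolding lin_indep_on_def by simp
  then show "\<forall>i\<in>I. c i = 0" using rest by blast
qed

lemma lin_indep_on_tensor:
  assumes f: "lin_indep_on X I f" and g: "lin_indep_on Y J g"
  shows "lin_indep_on (X \<times> Y) (I \<times> J) (\<lambda>(i,j) (x,y). f i x * g j y)"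
  unfolding lin_indep_on_def
proof (intro allI impI ballI)
  fix c ij
  assume zero: "\<forall>xy\<in>X \<times> Y. (\<Sum>ij\<in>I \<times> J. c ij * (case ij of (i, j) \<Rightarrow> \<lambda>(x, y). f i x * g j y) xy) = 0"
    and ij: "ij \<in> I \<times> J"
  have partial: "\<forall>j\<in>J. (\<Sum>i\<in>I. c (i,j) * f i x) = 0" if x: "x \<in> X" for x
  proof -
    have "(\<Sum>j\<in>J. (\<Sum>i\<in>I. c (i,j) * f i x) * g j y) = 0" if y: "y \<in> Y" for y
    proof -
      have "(\<Sum>j\<in>J. (\<Sum>i\<in>I. c (i,j) * f i x) * g j y) = (\<Sum>i\<in>I. \<Sum>j\<in>J. c (i,j) * (f i x * g j y))"
        unfolding sum_distrib_right by (subst sum.swap) (simp add: mult_ac)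
      also have "\<dots> = (\<Sum>ij\<in>I \<times> J. c ij * (case ij of (i, j) \<Rightarrow> \<lambda>(x, y). f i x * g j y) (x,y))"
        unfolding sum.cartesian_product by (rule sum.cong) auto
      finally show ?thesis using zero x y by simp
    qed
    then show ?thesis
      using g[unfolded lin_indep_on_def, THEN spec[of _ "\<lambda>j. \<Sum>i\<in>I. c (i,j) * f i x"]] by simp
  qed
  obtain i j where "ij = (i,j)" "i \<in> I" "j \<in> J" using ij by blast
  moreover have "\<forall>i\<in>I. c (i,j) = 0"
    using f[unfolded lin_indep_on_def, THEN spec[of _ "\<lambda>i. c (i,j)"]] partial \<open>j \<in> J\<close> by simp
  ultimately show "c ij = 0" by simp
qed

lemma lin_indep_on_tensor3:
  assumes "lin_indep_on X I f" "lin_indep_on Y J g" "lin_indep_on Z K h"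
  shows "lin_indep_on (X \<times> Y \<times> Z) (I \<times> J \<times> K) (\<lambda>(i,j,k) (x,y,z). f i x * g j y * h k z)"
proof -
  have "lin_indep_on (X \<times> Y \<times> Z) (I \<times> J \<times> K)
      (\<lambda>(i,jk) (x,yz). f i x * (\<lambda>(j,k) (y,z). g j y * h k z) jk yz)"
    using assms by (intro lin_indep_on_tensor)
  then show ?thesis
    by (subst lin_indep_on_cong[where g = "\<lambda>(i,jk) (x,yz). f i x * (\<lambda>(j,k) (y,z). g j y * h k z) jk yz"])
      (auto simp: mult_ac)
qed

lemma block_index_inverse:
  fixes i k r :: nat
  assumes "1 \<le> i" "i \<le> r" "1 \<le> k"
  shows "(i + (k - 1) * r - 1) mod r + 1 = i" "(i + (k - 1) * r - 1) div r + 1 = k"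
proof -
  obtain i0 k0 where ik: "i = Suc i0" "k = Suc k0" using assms by (metis Suc_le_D One_nat_def)
  then have "i + (k - 1) * r - 1 = i0 + r * k0" "i0 < r" using assms by (auto simp: mult.commute)
  then show "(i + (k - 1) * r - 1) mod r + 1 = i" "(i + (k - 1) * r - 1) div r + 1 = k"
    using ik by simp_all
qed

lemma block_index_range:
  fixes i r \<beta> n :: nat
  assumes "i \<in> {1..r}" "\<beta> \<in> {1..n}"
  shows "i + (\<beta> - 1) * r \<in> {1..n * r}"
proof -
  have "i + (\<beta> - 1) * r \<le> \<beta> * r" using assms by (cases \<beta>) auto
  also have "\<dots> \<le> n * r" using assms by simp
  finally show ?thesis using assms by simp
qed

lemma block_index_bij:
  fixes r n :: nat
  assumes "0 < r"
  shows "bij_betw (\<lambda>a. ((a - 1) mod r + 1, (a - 1) div r + 1)) {1..n * r} ({1..r} \<times> {1..n})"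
proof (rule bij_betw_byWitness[where f' = "\<lambda>(i,k). i + (k - 1) * r"])
  show "\<forall>a\<in>{1..n * r}. (\<lambda>(i,k). i + (k - 1) * r) ((a - 1) mod r + 1, (a - 1) div r + 1) = a"
    by (simp add: mult.commute)
  show "\<forall>ik\<in>{1..r} \<times> {1..n}. (\<lambda>a. ((a - 1) mod r + 1, (a - 1) div r + 1)) ((\<lambda>(i,k). i + (k - 1) * r) ik) = ik"
    using block_index_inverse by auto
  show "(\<lambda>a. ((a - 1) mod r + 1, (a - 1) div r + 1)) ` {1..n * r} \<subseteq> {1..r} \<times> {1..n}"
    using assms by (auto simp: Suc_le_eq less_mult_imp_div_less)
  show "(\<lambda>(i,k). i + (k - 1) * r) ` ({1..r} \<times> {1..n}) \<subseteq> {1..n * r}"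
    using block_index_range by auto
qed

lemma block_index_decompose:
  fixes r n a :: nat
  assumes "0 < r" "a \<in> {1..n * r}"
  obtains i \<beta> where "i \<in> {1..r}" "\<beta> \<in> {1..n}" "a = i + (\<beta> - 1) * r"
proof -
  have "(a - 1) mod r + 1 \<in> {1..r}" "(a - 1) div r + 1 \<in> {1..n}"
    using bij_betw_apply[OF block_index_bij[OF assms(1)] assms(2)] by auto
  moreover have "a = (a - 1) mod r + 1 + ((a - 1) div r + 1 - 1) * r"
    using assms(2) by (simp add: mod_div_mult_eq)
  ultimately show thesis by (rule that)
qed

lemma block_index_inj:
  fixes nr i i' j j' :: nat
  assumes "i \<in> {1..nr}" "i' \<in> {1..nr}" "1 \<le> j" "1 \<le> j'" "i + (j - 1) * nr = i' + (j' - 1) * nr"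
  shows "i = i' \<and> j = j'"
  using block_index_inverse[of i nr j] block_index_inverse[of i' nr j'] assms by auto

lemma lin_indep_on_vec3:
  assumes "0 < n1" "0 < n2"
    and indep: "lin_indep_on X ({1..n1} \<times> {1..n2} \<times> {1..n3}) (\<lambda>(i,j,k). F i j k)"
  shows "lin_indep_on X {1..n3 * n1 * n2} (vec3 n1 n2 F)"
proof -
  define h where "h = map_prod id (\<lambda>a. ((a - 1) mod n2 + 1, (a - 1) div n2 + 1)) \<circ>
                      (\<lambda>a. ((a - 1) mod n1 + 1, (a - 1) div n1 + 1))"
  have "bij_betw h {1..(n3 * n2) * n1} ({1..n1} \<times> {1..n2} \<times> {1..n3})"
    unfolding h_def using assms
    by (intro bij_betw_trans[OF block_index_bij bij_betw_map_prod[OF bij_betw_id block_index_bij]])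
  moreover have "vec3 n1 n2 F = (\<lambda>a. (\<lambda>(i,j,k). F i j k) (h a))"
    by (rule ext) (simp add: vec3_def h_def div_mult2_eq)
  ultimately show ?thesis
    using lin_indep_on_reindex[OF _ indep] by (simp add: mult_ac)
qed

lemma lin_indep_on_vec3_tensor:
  assumes "0 < n1" "0 < n2"
    and "lin_indep_on X {1..n1} f" "lin_indep_on Y {1..n2} g" "lin_indep_on Z {1..n3} h"
  shows "lin_indep_on (X \<times> Y \<times> Z) {1..n3 * n1 * n2} (vec3 n1 n2 (\<lambda>i j k (x, y, z). f i x * g j y * h k z))"
  using assms by (intro lin_indep_on_vec3 lin_indep_on_tensor3)

section \<open>B-splines on a knot span: Marsden's identity\<close>

lemma kn_mono:
  assumes "sorted t" "1 \<le> i" "i \<le> j" "j \<le> length t"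
  shows "kn t i \<le> kn t j"
  using assms by (simp add: kn_def sorted_nth_mono)

lemma bspl_zero_off_support:
  assumes st: "sorted t" and l: "1 \<le> l" "l < length t"
    and x: "kn t l < x" "x < kn t (l+1)"
    and j: "1 \<le> j" "j + q < length t" and off: "l < j \<or> j + q < l"
  shows "bspl t q j x = 0"
  using j off
proof (induction q arbitrary: j)
  case 0
  have "kn t (l+1) \<le> last t"
    using kn_mono[OF st, of "l+1" "length t"] l by (cases t) (auto simp: kn_def last_conv_nth)
  then have "x \<noteq> last t" using x by simp
  moreover have "x < kn t j \<or> kn t (j+1) \<le> x"
  proof (cases "l < j")
    case True
    then show ?thesis using kn_mono[OF st, of "l+1" j] 0 x by simp
  next
    case False
    then show ?thesis using kn_mono[OF st, of "j+1" l] 0 l x by simp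
  qed
  ultimately show ?case by auto
next
  case (Suc q)
  then have "bspl t q j x = 0" "bspl t q (j+1) x = 0" by (auto intro: Suc.IH)
  then show ?case by simp
qed

definition marsden_poly :: "real list \<Rightarrow> nat \<Rightarrow> nat \<Rightarrow> real poly" where
  "marsden_poly t q j = (\<Prod>i=1..q. [:- kn t (j+i), 1:])"

lemma poly_marsden_poly: "poly (marsden_poly t q j) y = (\<Prod>i=1..q. y - kn t (j+i))"
  by (simp add: marsden_poly_def poly_prod)

lemma poly_marsden_poly_Suc_right:
  "poly (marsden_poly t (Suc q) j) y = poly (marsden_poly t q j) y * (y - kn t (j + Suc q))"
  unfolding poly_marsden_poly by (simp add: prod.nat_ivl_Suc' mult.commute)

lemma poly_marsden_poly_Suc_left:
  "1 \<le> j \<Longrightarrow> poly (marsden_poly t (Suc q) (j - 1)) y = (y - kn t j) * poly (marsden_poly t q j) y"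
  unfolding poly_marsden_poly
  by (simp add: prod.atLeast_Suc_atMost prod.shift_bounds_cl_Suc_ivl del: prod.cl_ivl_Suc)

text \<open>The Cox--de Boor recursion, transposed onto the coefficients.\<close>
lemma sum_bspl_Suc:
  assumes st: "sorted t" and l: "Suc q < l" "l + Suc q < length t"
    and x: "kn t l < x" "x < kn t (l+1)"
  shows "(\<Sum>j=l-Suc q..l. c j * bspl t (Suc q) j x)
       = (\<Sum>j=l-q..l. (c j * ((x - kn t j) / (kn t (j+q+1) - kn t j))
                      + c (j-1) * ((kn t (j+q+1) - x) / (kn t (j+q+1) - kn t j))) * bspl t q j x)"
proof -
  define B where "B j = bspl t q j x" for j
  define w1 where "w1 j = (x - kn t j) / (kn t (j+q+1) - kn t j)" for j
  define w2 where "w2 j = (kn t (j+q+1) - x) / (kn t (j+q+1) - kn t j)" for j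
  have B_out: "B (l - Suc q) = 0" "B (Suc l) = 0"
    unfolding B_def using l by (auto intro!: bspl_zero_off_support[OF st _ _ x])
  have "(\<Sum>j=l-Suc q..l. c j * bspl t (Suc q) j x)
      = (\<Sum>j=l-Suc q..l. c j * w1 j * B j) + (\<Sum>j=l-Suc q..l. c j * w2 (Suc j) * B (Suc j))"
    by (simp add: B_def w1_def w2_def sum.distrib[symmetric] algebra_simps)
  also have "(\<Sum>j=l-Suc q..l. c j * w1 j * B j) = (\<Sum>j=l-q..l. c j * w1 j * B j)"
  proof -
    have "{l-Suc q..l} = insert (l - Suc q) {l-q..l}" using l by auto
    then show ?thesis using B_out l by simp
  qed
  also have "(\<Sum>j=l-Suc q..l. c j * w2 (Suc j) * B (Suc j)) = (\<Sum>j=l-q..l. c (j-1) * w2 j * B j)"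
  proof -
    have "(\<Sum>j=l-Suc q..l. c j * w2 (Suc j) * B (Suc j)) = (\<Sum>j=Suc (l-Suc q)..Suc l. c (j-1) * w2 j * B j)"
      by (subst sum.shift_bounds_cl_Suc_ivl) simp
    also have "{Suc (l-Suc q)..Suc l} = insert (Suc l) {l-q..l}" using l by auto
    finally show ?thesis using B_out by simp
  qed
  finally show ?thesis
    by (simp add: B_def w1_def w2_def sum.distrib[symmetric] algebra_simps)
qed

lemma marsden_weights:
  fixes s T x y :: real
  assumes "s < T"
  shows "(y - T) * ((x - s) / (T - s)) + (y - s) * ((T - x) / (T - s)) = y - x"
  using assms by (simp add: divide_simps) (simp add: algebra_simps)

theorem marsden_identity:
  assumes st: "sorted t" and l: "q < l" "l + q < length t"
    and x: "kn t l < x" "x < kn t (l+1)"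
  shows "(\<Sum>j=l-q..l. poly (marsden_poly t q j) y * bspl t q j x) = (y - x) ^ q"
  using l
proof (induction q)
  case 0
  then show ?case using x by (simp add: marsden_poly_def)
next
  case (Suc q)
  have step: "(poly (marsden_poly t (Suc q) j) y * ((x - kn t j) / (kn t (j+q+1) - kn t j))
        + poly (marsden_poly t (Suc q) (j-1)) y * ((kn t (j+q+1) - x) / (kn t (j+q+1) - kn t j)))
        * bspl t q j x
      = (y - x) * (poly (marsden_poly t q j) y * bspl t q j x)"
    if j: "j \<in> {l-q..l}" for j
  proof (cases "bspl t q j x = 0")
    case False
    have "j \<le> l" "l \<le> j + q"
      using bspl_zero_off_support[OF st _ _ x, of j q] False j Suc.prems by force+
    moreover have "1 \<le> j" using j Suc.prems by auto
    ultimately have lt: "kn t j < kn t (j+q+1)"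
      using kn_mono[OF st, of j l] kn_mono[OF st, of "l+1" "j+q+1"] j Suc.prems x by auto
    have left: "poly (marsden_poly t (Suc q) (j-1)) y = (y - kn t j) * poly (marsden_poly t q j) y"
      using poly_marsden_poly_Suc_left \<open>1 \<le> j\<close> by blast
    have right: "poly (marsden_poly t (Suc q) j) y = poly (marsden_poly t q j) y * (y - kn t (j+q+1))"
      using poly_marsden_poly_Suc_right by simp
    show ?thesis
      unfolding left right marsden_weights[OF lt, of y x, symmetric]
      by (simp only: distrib_left distrib_right mult_ac)
  qed simp
  have "(\<Sum>j=l-Suc q..l. poly (marsden_poly t (Suc q) j) y * bspl t (Suc q) j x)
      = (\<Sum>j=l-q..l. (y - x) * (poly (marsden_poly t q j) y * bspl t q j x))"
    unfolding sum_bspl_Suc[OF st Suc.prems x] by (intro sum.cong refl step)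
  also have "\<dots> = (y - x) ^ Suc q"
    using Suc by (simp add: sum_distrib_left[symmetric])
  finally show ?case .
qed

lemma sum_coeff_marsden_poly:
  assumes st: "sorted t" and l: "q < l" "l + q < length t"
    and x: "kn t l < x" "x < kn t (l+1)" and k: "k \<le> q"
  shows "(\<Sum>j=l-q..l. coeff (marsden_poly t q j) k * bspl t q j x) = of_nat (q choose k) * (-x) ^ (q - k)"
proof -
  have "poly (\<Sum>j=l-q..l. smult (bspl t q j x) (marsden_poly t q j)) y = poly ([:-x, 1:] ^ q) y" for y
    using marsden_identity[OF st l x, of y] by (simp add: poly_sum poly_power mult.commute)
  then have "(\<Sum>j=l-q..l. smult (bspl t q j x) (marsden_poly t q j)) = [:-x, 1:] ^ q"
    by (rule poly_ext)
  from arg_cong[where f = "\<lambda>p. coeff p k", OF this] show ?thesis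
    using coeff_linear_poly_power[OF k, of "-x" 1] by (simp add: coeff_sum mult.commute)
qed

text \<open>\<open>real \<Rightarrow> real\<close> carries no \<open>real_vector\<close> instance, so its vector space structure is
  obtained by interpreting the \<open>vector_space\<close> locale.\<close>
definition fun_scale :: "real \<Rightarrow> (real \<Rightarrow> real) \<Rightarrow> real \<Rightarrow> real" where
  "fun_scale c f = (\<lambda>x. c * f x)"

interpretation fun_space: vector_space fun_scale
  by unfold_locales (auto simp: fun_scale_def fun_eq_iff algebra_simps)

lemma sum_fun_apply: "(sum f A) x = (\<Sum>a\<in>A. f a x)"
  for f :: "'b \<Rightarrow> 'a \<Rightarrow> 'c::comm_monoid_add"
  by (induction A rule: infinite_finite_induct) auto

text \<open>Functions are compared on \<open>I\<close> only, by extending them by zero outside \<open>I\<close>.\<close>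
definition restrict_zero :: "real set \<Rightarrow> (real \<Rightarrow> real) \<Rightarrow> real \<Rightarrow> real" where
  "restrict_zero I f = (\<lambda>x. if x \<in> I then f x else 0)"

definition monomial_on :: "real set \<Rightarrow> nat \<Rightarrow> real \<Rightarrow> real" where
  "monomial_on I i = restrict_zero I (\<lambda>x. x ^ i)"

lemma polyfun_zero_on_infinite:
  fixes c :: "nat \<Rightarrow> real"
  assumes "infinite I" "\<forall>x\<in>I. (\<Sum>k\<le>n. c k * x ^ k) = 0" "k \<le> n"
  shows "c k = 0"
  using assms polyfun_finite_roots[of c n] finite_subset[of I] by (metis (mono_tags, lifting) mem_Collect_eq subsetI)

lemma inj_on_monomial_on:
  assumes "infinite I" shows "inj_on (monomial_on I) {..q}"
proof (rule inj_onI, rule ccontr)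
  fix i i' assume ii: "i \<in> {..q}" "i' \<in> {..q}" and eq: "monomial_on I i = monomial_on I i'" and "i \<noteq> i'"
  define c where "c k = (if k = i then 1 else 0) - (if k = i' then 1 else (0::real))" for k
  have vanish: "\<forall>x\<in>I. (\<Sum>k\<le>q. c k * x ^ k) = 0"
  proof
    fix x assume "x \<in> I"
    have "(\<Sum>k\<le>q. c k * x ^ k) = (\<Sum>k\<le>q. (if k = i then x ^ k else 0) - (if k = i' then x ^ k else 0))"
      by (rule sum.cong) (auto simp: c_def)
    also have "\<dots> = x ^ i - x ^ i'"
      using ii by (simp only: sum_subtractf) simp
    also have "x ^ i = x ^ i'"
      using fun_cong[OF eq, of x] \<open>x \<in> I\<close> by (simp add: monomial_on_def restrict_zero_def)
    finally show "(\<Sum>k\<le>q. c k * x ^ k) = 0" by simp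
  qed
  have "c i = 0" using polyfun_zero_on_infinite[OF assms vanish] ii by simp
  then show False using \<open>i \<noteq> i'\<close> by (simp add: c_def)
qed

lemma independent_monomial_on:
  assumes "infinite I" shows "fun_space.independent (monomial_on I ` {..q})"
proof (rule fun_space.independent_if_scalars_zero)
  fix f v assume s: "(\<Sum>u\<in>monomial_on I ` {..q}. fun_scale (f u) u) = 0"
    and v: "v \<in> monomial_on I ` {..q}"
  have s': "(\<Sum>i\<le>q. fun_scale (f (monomial_on I i)) (monomial_on I i)) = 0"
    using s by (simp add: sum.reindex[OF inj_on_monomial_on[OF assms]])
  have "\<forall>x\<in>I. (\<Sum>i\<le>q. f (monomial_on I i) * x ^ i) = 0"
  proof
    fix x assume "x \<in> I"
    then show "(\<Sum>i\<le>q. f (monomial_on I i) * x ^ i) = 0"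
      using fun_cong[OF s', of x] by (simp add: sum_fun_apply fun_scale_def monomial_on_def restrict_zero_def)
  qed
  moreover obtain i where "i \<le> q" "v = monomial_on I i" using v by auto
  ultimately show "f v = 0"
    using polyfun_zero_on_infinite[OF assms, where c = "\<lambda>i. f (monomial_on I i)"] by blast
qed simp

lemma coeff_eq_0_if_span_monomials:
  fixes B :: "nat \<Rightarrow> real \<Rightarrow> real"
  assumes I: "infinite I" and J: "finite J" "card J \<le> q + 1"
    and span: "\<And>i. i \<le> q \<Longrightarrow> monomial_on I i \<in> fun_space.span ((\<lambda>j. restrict_zero I (B j)) ` J)"
    and zero: "\<And>x. x \<in> I \<Longrightarrow> (\<Sum>j\<in>J. c j * B j x) = 0" and j0: "j0 \<in> J"
  shows "c j0 = 0"
proof (rule ccontr)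
  assume c0: "c j0 \<noteq> 0"
  define T where "T = (\<lambda>j. restrict_zero I (B j)) ` (J - {j0})"
  have "restrict_zero I (B j0) = (\<Sum>j\<in>J-{j0}. fun_scale (- c j / c j0) (restrict_zero I (B j)))"
  proof
    fix x
    show "restrict_zero I (B j0) x = (\<Sum>j\<in>J-{j0}. fun_scale (- c j / c j0) (restrict_zero I (B j))) x"
    proof (cases "x \<in> I")
      case True
      have "c j0 * B j0 x + (\<Sum>j\<in>J-{j0}. c j * B j x) = 0"
        using zero[OF True] J j0 by (simp add: sum.remove)
      then have "B j0 x = (\<Sum>j\<in>J-{j0}. c j * B j x) / - c j0"
        using c0 by (simp add: field_simps)
      also have "\<dots> = (\<Sum>j\<in>J-{j0}. - c j / c j0 * B j x)"
        by (simp add: sum_divide_distrib sum_negf)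
      finally show ?thesis
        using True by (simp add: sum_fun_apply fun_scale_def restrict_zero_def)
    qed (simp add: sum_fun_apply fun_scale_def restrict_zero_def)
  qed
  then have "restrict_zero I (B j0) \<in> fun_space.span T"
    unfolding T_def by (metis (no_types, lifting) DiffI fun_space.span_base fun_space.span_scale
        fun_space.span_sum image_eqI)
  then have "(\<lambda>j. restrict_zero I (B j)) ` J \<subseteq> fun_space.span T"
    unfolding T_def by (auto intro: fun_space.span_base)
  then have "monomial_on I ` {..q} \<subseteq> fun_space.span T"
    using span fun_space.span_minimal[OF _ fun_space.subspace_span] by blast
  from fun_space.independent_span_bound[OF _ independent_monomial_on[OF I] this]
  have "card (monomial_on I ` {..q}) \<le> card T" using J unfolding T_def by simp
  moreover have "card T \<le> card J - 1"
    unfolding T_def using card_image_le[of "J - {j0}"] J j0 by (simp add: card_Diff_singleton)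
  ultimately show False using card_image[OF inj_on_monomial_on[OF I]] J by simp
qed

lemma monomial_on_in_span_bspl:
  assumes st: "sorted t" and l: "q < l" "l + q < length t"
    and I: "I = {kn t l <..< kn t (l+1)}" and i: "i \<le> q"
  shows "monomial_on I i \<in> fun_space.span ((\<lambda>j. restrict_zero I (bspl t q j)) ` {l-q..l})"
proof -
  define C where "C = of_nat (q choose (q - i)) * (-1::real) ^ i"
  have "C \<noteq> 0" by (simp add: C_def)
  have eq: "monomial_on I i
      = fun_scale (1 / C) (\<Sum>j\<in>{l-q..l}. fun_scale (coeff (marsden_poly t q j) (q - i)) (restrict_zero I (bspl t q j)))"
  proof
    fix x
    have "(\<Sum>j=l-q..l. coeff (marsden_poly t q j) (q - i) * bspl t q j x) = C * x ^ i" if "x \<in> I"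
      using sum_coeff_marsden_poly[OF st l, of x "q - i"] that i
      by (simp add: I C_def power_minus[of x i])
    then show "monomial_on I i x = fun_scale (1 / C) (\<Sum>j\<in>{l-q..l}.
        fun_scale (coeff (marsden_poly t q j) (q - i)) (restrict_zero I (bspl t q j))) x"
      using \<open>C \<noteq> 0\<close> by (simp add: sum_fun_apply fun_scale_def monomial_on_def restrict_zero_def)
  qed
  show ?thesis
    unfolding eq by (intro fun_space.span_scale fun_space.span_sum fun_space.span_base) auto
qed

text \<open>On each of the given knot spans the active B-splines span the monomials of degree at most
  \<open>q\<close>, so they are independent there.\<close>
lemma lin_indep_on_bspl:
  assumes st: "sorted t" and lo: "1 \<le> lo" and hi: "hi + q < length t"
    and spans: "\<And>j. j \<in> {lo..hi} \<Longrightarrow> \<exists>l. j \<le> l \<and> lo + q \<le> l \<and> l \<le> j + q \<and> l \<le> hi \<and>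
                   kn t l < kn t (l+1) \<and> {kn t l<..<kn t (l+1)} \<subseteq> X"
  shows "lin_indep_on X {lo..hi} (bspl t q)"
  unfolding lin_indep_on_def
proof (intro allI impI ballI)
  fix c j
  assume zero: "\<forall>x\<in>X. (\<Sum>i\<in>{lo..hi}. c i * bspl t q i x) = 0" and j: "j \<in> {lo..hi}"
  obtain l where l: "j \<le> l" "lo + q \<le> l" "l \<le> j + q" "l \<le> hi"
    and span: "kn t l < kn t (l+1)" "{kn t l<..<kn t (l+1)} \<subseteq> X"
    using spans[OF j] by blast
  define I where "I = {kn t l<..<kn t (l+1)}"
  have local_sum: "(\<Sum>i\<in>{l-q..l}. c i * bspl t q i x) = 0" if x: "x \<in> I" for x
  proof -
    have "bspl t q i x = 0" if "i \<in> {lo..hi} - {l-q..l}" for i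
      using that l lo hi x by (intro bspl_zero_off_support[OF st, where l = l]) (auto simp: I_def)
    then have "(\<Sum>i\<in>{lo..hi}. c i * bspl t q i x) = (\<Sum>i\<in>{l-q..l}. c i * bspl t q i x)"
      using l by (intro sum.mono_neutral_right) auto
    then show ?thesis using zero x span(2) by (auto simp: I_def)
  qed
  show "c j = 0"
  proof (rule coeff_eq_0_if_span_monomials[OF _ _ _ _ local_sum])
    show "infinite I" using span(1) by (simp add: I_def)
    show "monomial_on I i \<in> fun_space.span ((\<lambda>j. restrict_zero I (bspl t q j)) ` {l-q..l})" if "i \<le> q" for i
      using monomial_on_in_span_bspl[OF st _ _ I_def that] l lo hi by simp
  qed (use l lo in auto)
qed

section \<open>Open and periodic \<open>C\<^sup>1\<close> spline spaces\<close>

lemma kn_strict_step: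
  assumes "1 \<le> u" "u < v" "v \<le> length t" "kn t u < kn t v"
  shows "\<exists>l. u \<le> l \<and> l < v \<and> kn t l < kn t (l+1)"
  using assms
proof (induction v)
  case (Suc v)
  show ?case
  proof (cases "kn t v < kn t (Suc v)")
    case True
    then show ?thesis using Suc.prems by (intro exI[of _ v]) auto
  next
    case False
    with Suc.prems have lt: "kn t u < kn t v" by simp
    then have "u < v" using Suc.prems by (cases "u = v") auto
    then obtain l where "u \<le> l" "l < v" "kn t l < kn t (l+1)"
      using Suc.IH[OF Suc.prems(1) _ _ lt] Suc.prems(3) by auto
    then show ?thesis by (intro exI[of _ l]) auto
  qed
qed simp

lemma knot_mult_ge_repeated:
  assumes st: "sorted t" and uv: "1 \<le> u" "u \<le> v" "v \<le> length t" and eq: "kn t u = kn t v"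
  shows "v - u + 1 \<le> knot_mult t (kn t u)"
proof -
  have "{u..v} \<subseteq> {k \<in> {1..length t}. kn t k = kn t u}"
  proof
    fix k assume k: "k \<in> {u..v}"
    have "kn t u \<le> kn t k" "kn t k \<le> kn t v"
      using kn_mono[OF st, of u k] kn_mono[OF st, of k v] k uv by auto
    then show "k \<in> {k \<in> {1..length t}. kn t k = kn t u}" using k uv eq by auto
  qed
  from card_mono[OF _ this] show ?thesis unfolding knot_mult_def using uv(2) by simp
qed

context
  fixes t p m a b
  assumes knots: "open_C1_knots t p m a b"
begin

lemma open_C1_knotsD:
  "1 \<le> p" "length t = m + p + 1" "sorted t" "a < b"
  "\<And>i. i \<in> {1..p+1} \<Longrightarrow> kn t i = a" "\<And>i. i \<in> {m+1..m+p+1} \<Longrightarrow> kn t i = b"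
  "\<And>i. i \<in> {p+2..m} \<Longrightarrow> knot_mult t (kn t i) \<le> p - 1"
  using knots unfolding open_C1_knots_def by auto

lemma open_C1_knots_m_ge: "p + 1 \<le> m"
  using open_C1_knotsD(4) open_C1_knotsD(5,6)[of "m+1"] by (cases "p + 1 \<le> m") auto

lemma open_C1_knots_span_subset:
  "1 \<le> l \<Longrightarrow> l < length t \<Longrightarrow> {kn t l<..<kn t (l+1)} \<subseteq> {a..b}"
  using kn_mono[OF open_C1_knotsD(3), of 1 l] kn_mono[OF open_C1_knotsD(3), of "l+1" "length t"]
    open_C1_knotsD(2,5,6) by fastforce

text \<open>The \<open>C\<^sup>1\<close> condition enters here and in the next lemma: an interior knot has multiplicity
  below \<open>p\<close>.\<close>
lemma open_C1_knots_first_span: "kn t 1 < kn t (p+2)"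
proof (rule ccontr)
  assume "\<not> kn t 1 < kn t (p+2)"
  then have eq: "kn t 1 = kn t (p+2)"
    using kn_mono[OF open_C1_knotsD(3), of 1 "p+2"] open_C1_knotsD(2) open_C1_knots_m_ge by simp
  show False
  proof (cases "p + 2 \<le> m")
    case True
    then show False
      using knot_mult_ge_repeated[OF open_C1_knotsD(3), of 1 "p+2"] eq open_C1_knotsD(2) open_C1_knotsD(7)[of "p+2"]
      by simp
  next
    case False
    then show False
      using eq open_C1_knots_m_ge open_C1_knotsD(4) open_C1_knotsD(5,6)[of "p+2"] open_C1_knotsD(5)[of 1] by simp
  qed
qed

lemma open_C1_knots_gap:
  assumes "2 \<le> j" "j \<le> m"
  shows "kn t (max j (p+1)) < kn t (j + p)"
proof (cases "j \<le> p + 1")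
  case True
  have "kn t (p+2) \<le> kn t (j+p)"
    using kn_mono[OF open_C1_knotsD(3), of "p+2" "j+p"] assms open_C1_knotsD(2) by simp
  then show ?thesis
    using open_C1_knots_first_span True open_C1_knotsD(5)[of 1] open_C1_knotsD(5)[of "p+1"] by simp
next
  case False
  have "kn t j < kn t (j+p)"
  proof (rule ccontr)
    assume "\<not> kn t j < kn t (j+p)"
    then have "kn t j = kn t (j+p)"
      using kn_mono[OF open_C1_knotsD(3), of j "j+p"] assms open_C1_knotsD(2) by simp
    then show False
      using knot_mult_ge_repeated[OF open_C1_knotsD(3), of j "j+p"] open_C1_knotsD(1,2) open_C1_knotsD(7)[of j] assms False
      by simp
  qed
  then show ?thesis using False by simp
qed

lemma open_C1_knots_span_in_support:
  assumes j: "2 \<le> j" "j \<le> m"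
  shows "\<exists>l. j \<le> l \<and> p + 1 \<le> l \<and> l \<le> j + p - 1 \<and> l \<le> m \<and> kn t l < kn t (l+1)"
proof -
  define u where "u = max j (p+1)"
  define v where "v = min (j + p - 1) m + 1"
  have "kn t v = kn t (j + p)"
    using open_C1_knotsD(1) open_C1_knotsD(6)[of v] open_C1_knotsD(6)[of "j+p"] j by (cases "j + p - 1 \<le> m") (auto simp: v_def)
  then have "kn t u < kn t v" using open_C1_knots_gap[OF j] by (simp add: u_def)
  moreover have "1 \<le> u" "u < v" "v \<le> length t"
    using j open_C1_knots_m_ge open_C1_knotsD(1,2) by (auto simp: u_def v_def)
  ultimately obtain l where "u \<le> l" "l < v" "kn t l < kn t (l+1)" using kn_strict_step by blast
  then show ?thesis by (auto simp: u_def v_def)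
qed

lemma lin_indep_on_bspl_open: "lin_indep_on {a..b} {1..m} (bspl t p)"
proof (rule lin_indep_on_bspl[OF open_C1_knotsD(3)])
  fix j assume j: "j \<in> {1..m}"
  have "2 \<le> max j 2" "max j 2 \<le> m" using open_C1_knots_m_ge open_C1_knotsD(1) j by auto
  then obtain l where l: "max j 2 \<le> l" "p + 1 \<le> l" "l \<le> max j 2 + p - 1" "l \<le> m" "kn t l < kn t (l+1)"
    using open_C1_knots_span_in_support by blast
  then show "\<exists>l. j \<le> l \<and> 1 + p \<le> l \<and> l \<le> j + p \<and> l \<le> m \<and> kn t l < kn t (l+1) \<and>
               {kn t l<..<kn t (l+1)} \<subseteq> {a..b}"
    using j open_C1_knots_span_subset[of l] open_C1_knotsD(2) by (intro exI[of _ l]) (auto simp: max_def split: if_split_asm)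
qed (use open_C1_knotsD(2) in auto)

lemma dspl_denominator_pos:
  assumes j: "j \<in> {1..m-1}"
  shows "kn t (j+1) < kn t (j+p+1)"
proof -
  have "2 \<le> j + 1" "j + 1 \<le> m" using j by auto
  then obtain l where l: "j + 1 \<le> l" "l \<le> j + p" "kn t l < kn t (l+1)"
    using open_C1_knots_span_in_support[of "j+1"] by auto
  have "kn t (j+1) \<le> kn t l" "kn t (l+1) \<le> kn t (j+p+1)"
    using l j open_C1_knotsD(2) by (auto intro!: kn_mono[OF open_C1_knotsD(3)])
  then show ?thesis using l(3) by linarith
qed

lemma lin_indep_on_dspl_open: "lin_indep_on {a..b} {1..m-1} (dspl t p)"
proof -
  have bspl: "lin_indep_on {a..b} {2..m} (bspl t (p-1))"
  proof (rule lin_indep_on_bspl[OF open_C1_knotsD(3)])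
    fix j assume "j \<in> {2..m}"
    then obtain l where l: "j \<le> l" "p + 1 \<le> l" "l \<le> j + p - 1" "l \<le> m" "kn t l < kn t (l+1)"
      using open_C1_knots_span_in_support by auto
    then show "\<exists>l. j \<le> l \<and> 2 + (p-1) \<le> l \<and> l \<le> j + (p-1) \<and> l \<le> m \<and> kn t l < kn t (l+1)
            \<and> {kn t l<..<kn t (l+1)} \<subseteq> {a..b}"
      using open_C1_knots_span_subset[of l] open_C1_knotsD(1,2) by (intro exI[of _ l]) auto
  qed (use open_C1_knotsD(2) in auto)
  have shift: "bij_betw Suc {1..m-1} {2..m}"
    using open_C1_knots_m_ge open_C1_knotsD(1) by (simp add: bij_betw_def numeral_2_eq_2 image_Suc_atLeastAtMost)
  have scale: "real p / (kn t (j+p+1) - kn t (j+1)) \<noteq> 0" if "j \<in> {1..m-1}" for j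
    using dspl_denominator_pos[OF that] open_C1_knotsD(1) by simp
  show ?thesis
    using lin_indep_on_scale[where \<kappa> = "\<lambda>j. real p / (kn t (j+p+1) - kn t (j+1))",
        OF lin_indep_on_reindex[OF shift bspl] scale]
    by (simp add: dspl_def[abs_def])
qed

end

lemma lin_indep_on_H0:
  assumes "3 \<le> m"
  shows "lin_indep_on {1..m} {1..m-2} (H0 t p m)"
proof (rule lin_indep_on_isolating_columns[where Hd = "{}"])
  fix i assume "i \<in> {1..m-2} - {}"
  then show "\<exists>l\<in>{1..m}. H0 t p m i l \<noteq> 0 \<and> (\<forall>i'\<in>{1..m-2}. i' \<noteq> i \<longrightarrow> H0 t p m i' l = 0)"
    using assms by (intro bexI[of _ "i+1"]) (auto simp: H0_def)
qed (simp_all add: lin_indep_on_def)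

lemma lin_indep_on_H1:
  assumes "3 \<le> m" "per_c2 t p m \<noteq> 0"
  shows "lin_indep_on {1..m-1} {1..m-2} (H1 t p m)"
proof (rule lin_indep_on_isolating_columns[where Hd = "{}"])
  fix i assume i: "i \<in> {1..m-2} - {}"
  show "\<exists>l\<in>{1..m-1}. H1 t p m i l \<noteq> 0 \<and> (\<forall>i'\<in>{1..m-2}. i' \<noteq> i \<longrightarrow> H1 t p m i' l = 0)"
  proof (cases "i = m - 2")
    case True
    then show ?thesis using assms by (intro bexI[of _ 1]) (auto simp: H1_def)
  next
    case False
    then show ?thesis using assms i by (intro bexI[of _ "i+1"]) (auto simp: H1_def)
  qed
qed (simp_all add: lin_indep_on_def)

context
  fixes t p m a b
  assumes knots: "open_C1_knots t p m a b" and m3: "3 \<le> m"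
begin

lemma per_c2_pos: "0 < per_c2 t p m"
proof -
  have "kn t 1 < kn t (p+2)" by (rule open_C1_knots_first_span[OF knots])
  moreover have "kn t m \<le> kn t (m+p+1)"
    using kn_mono[OF open_C1_knotsD(3)[OF knots], of m "m+p+1"] open_C1_knotsD(2)[OF knots] m3 by simp
  ultimately show ?thesis unfolding per_c2_def by (simp add: divide_pos_pos)
qed

lemma lin_indep_on_per_B: "lin_indep_on {a..b} {1..m-2} (per_B t p m)"
  using lin_indep_on_matrix_combination[OF lin_indep_on_H0[OF m3] lin_indep_on_bspl_open[OF knots]]
  by (simp add: per_B_def[abs_def])

lemma lin_indep_on_per_D: "lin_indep_on {a..b} {1..m-2} (per_D t p m)"
proof -
  have "per_c2 t p m \<noteq> 0" using per_c2_pos by simp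
  from lin_indep_on_matrix_combination[OF lin_indep_on_H1[OF m3 this] lin_indep_on_dspl_open[OF knots]]
  show ?thesis by (simp add: per_D_def[abs_def])
qed

end

section \<open>Matrices whose non-zero rows are independent\<close>

definition nonzero_rows_indep :: "nat \<Rightarrow> nat \<Rightarrow> (nat \<Rightarrow> nat \<Rightarrow> real) \<Rightarrow> bool" where
  "nonzero_rows_indep n K M \<longleftrightarrow>
     (\<forall>Z \<subseteq> {1..n}. (\<forall>a\<in>Z. \<exists>b\<in>{1..K}. M a b \<noteq> 0) \<longrightarrow> lin_indep_on {1..K} Z M)"

lemma nonzero_lin_indep_iff:
  "nonzero_lin_indep X n N \<longleftrightarrow> lin_indep_on X {a \<in> {1..n}. \<exists>x\<in>X. N a x \<noteq> 0} N"
  by (simp add: nonzero_lin_indep_def lin_indep_on_def Let_def)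

lemma nonzero_lin_indep_matfun:
  assumes indep: "lin_indep_on X {1..K} v" and rows: "nonzero_rows_indep n K M"
  shows "nonzero_lin_indep X n (matfun K M v)"
proof -
  define Z where "Z = {a \<in> {1..n}. \<exists>x\<in>X. matfun K M v a x \<noteq> 0}"
  have "Z \<subseteq> {1..n}" by (auto simp: Z_def)
  moreover have "\<exists>b\<in>{1..K}. M a b \<noteq> 0" if a: "a \<in> Z" for a
  proof -
    obtain x where "(\<Sum>b=1..K. M a b * v b x) \<noteq> 0" using a unfolding Z_def matfun_def by blast
    then show ?thesis by (metis (no_types, lifting) mult_eq_0_iff sum.neutral)
  qed
  ultimately have "lin_indep_on {1..K} Z M"
    using rows unfolding nonzero_rows_indep_def by blast
  from lin_indep_on_matrix_combination[OF this indep]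
  show ?thesis
    unfolding nonzero_lin_indep_iff Z_def[symmetric] by (simp add: matfun_def[abs_def])
qed

lemma nonzero_rows_indep_if_disjoint_columns:
  assumes head: "finite Hd" "lin_indep_on {1..K} Hd M"
    and disjoint: "\<And>a a' b. a \<in> {1..n} - Hd \<Longrightarrow> a' \<in> {1..n} \<Longrightarrow> b \<in> {1..K} \<Longrightarrow>
                           M a b \<noteq> 0 \<Longrightarrow> M a' b \<noteq> 0 \<Longrightarrow> a' = a"
  shows "nonzero_rows_indep n K M"
  unfolding nonzero_rows_indep_def
proof (intro allI impI)
  fix Z assume Z: "Z \<subseteq> {1..n}" and nz: "\<forall>a\<in>Z. \<exists>b\<in>{1..K}. M a b \<noteq> 0"
  show "lin_indep_on {1..K} Z M"
  proof (rule lin_indep_on_isolating_columns)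
    show "finite Z" using Z finite_subset by blast
    show "lin_indep_on {1..K} (Z \<inter> Hd) M" using lin_indep_on_subset[OF head(2) _ head(1)] by blast
    show "\<exists>b\<in>{1..K}. M a b \<noteq> 0 \<and> (\<forall>a'\<in>Z. a' \<noteq> a \<longrightarrow> M a' b = 0)" if a: "a \<in> Z - Hd" for a
    proof -
      obtain b where b: "b \<in> {1..K}" "M a b \<noteq> 0" using nz a by blast
      have "M a' b = 0" if "a' \<in> Z" "a' \<noteq> a" for a'
        using disjoint[of a a' b] a b Z that by blast
      then show ?thesis using b by blast
    qed
  qed
qed

lemma nonzero_rows_indep_vstack_zero_below:
  assumes "nonzero_rows_indep rA K A"
  shows "nonzero_rows_indep (rA + rB) K (vstack rA A zerom)"
  unfolding nonzero_rows_indep_def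
proof (intro allI impI)
  fix Z assume Z: "Z \<subseteq> {1..rA + rB}" and nz: "\<forall>a\<in>Z. \<exists>b\<in>{1..K}. vstack rA A zerom a b \<noteq> 0"
  have "Z \<subseteq> {1..rA}"
  proof
    fix a assume a: "a \<in> Z"
    then obtain b where "vstack rA A zerom a b \<noteq> 0" using nz by blast
    then show "a \<in> {1..rA}" using a Z by (auto simp: vstack_def zerom_def split: if_splits)
  qed
  moreover have "\<forall>a\<in>Z. \<exists>b\<in>{1..K}. A a b \<noteq> 0" using nz calculation by (force simp: vstack_def)
  ultimately have "lin_indep_on {1..K} Z A" using assms unfolding nonzero_rows_indep_def by blast
  then show "lin_indep_on {1..K} Z (vstack rA A zerom)"
    using \<open>Z \<subseteq> {1..rA}\<close> by (subst lin_indep_on_cong[where g = A]) (auto simp: vstack_def)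
qed

lemma nonzero_rows_indep_vstack_zero_above:
  assumes "nonzero_rows_indep rB K B"
  shows "nonzero_rows_indep (rA + rB) K (vstack rA zerom B)"
  unfolding nonzero_rows_indep_def
proof (intro allI impI)
  fix Z assume Z: "Z \<subseteq> {1..rA + rB}" and nz: "\<forall>a\<in>Z. \<exists>b\<in>{1..K}. vstack rA zerom B a b \<noteq> 0"
  have above: "rA < a" if a: "a \<in> Z" for a
  proof -
    obtain b where "vstack rA zerom B a b \<noteq> 0" using nz a by blast
    then show ?thesis by (auto simp: vstack_def zerom_def split: if_splits)
  qed
  define Z' where "Z' = (\<lambda>a. a - rA) ` Z"
  have "inj_on (\<lambda>a. a - rA) Z"
  proof (rule inj_onI)
    fix x y assume "x \<in> Z" "y \<in> Z" "x - rA = y - rA"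
    then show "x = y" using above[of x] above[of y] by linarith
  qed
  then have bij: "bij_betw (\<lambda>a. a - rA) Z Z'" unfolding Z'_def by (simp add: bij_betw_def)
  have vstack_eq: "vstack rA zerom B a b = B (a - rA) b" if "a \<in> Z" for a b
    using above[OF that] by (simp add: vstack_def)
  have "Z' \<subseteq> {1..rB}" using Z above unfolding Z'_def by fastforce
  moreover have "\<forall>a'\<in>Z'. \<exists>b\<in>{1..K}. B a' b \<noteq> 0" using nz vstack_eq unfolding Z'_def by auto
  ultimately have "lin_indep_on {1..K} Z' B" using assms unfolding nonzero_rows_indep_def by blast
  from lin_indep_on_reindex[OF bij this]
  show "lin_indep_on {1..K} Z (vstack rA zerom B)"
    by (subst lin_indep_on_cong[where g = "\<lambda>a. B (a - rA)"]) (simp_all add: vstack_eq)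
qed

lemma kron_idm_block:
  fixes i j r k \<beta> \<gamma> :: nat
  assumes "i \<in> {1..r}" "j \<in> {1..k}" "1 \<le> \<beta>" "1 \<le> \<gamma>"
  shows "kron r k idm V (i + (\<beta> - 1) * r) (j + (\<gamma> - 1) * k) = (if \<beta> = \<gamma> then V i j else 0)"
  using assms block_index_inverse[of i r \<beta>] block_index_inverse[of j k \<gamma>] by (simp add: kron_def idm_def)

lemma sum_kron_idm_column:
  fixes r k n j \<beta> :: nat
  assumes r: "0 < r" and Z: "Z \<subseteq> {1..n * r}" and j: "j \<in> {1..k}" and \<beta>: "\<beta> \<in> {1..n}"
  shows "(\<Sum>a\<in>Z. c a * kron r k idm V a (j + (\<beta> - 1) * k))
       = (\<Sum>i\<in>{i \<in> {1..r}. i + (\<beta> - 1) * r \<in> Z}. c (i + (\<beta> - 1) * r) * V i j)"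
proof -
  define g where "g i = i + (\<beta> - 1) * r" for i
  define Z\<beta> where "Z\<beta> = {i \<in> {1..r}. g i \<in> Z}"
  have "(\<Sum>a\<in>Z. c a * kron r k idm V a (j + (\<beta> - 1) * k))
      = (\<Sum>a\<in>g ` Z\<beta>. c a * kron r k idm V a (j + (\<beta> - 1) * k))"
  proof (rule sum.mono_neutral_right)
    show "finite Z" using Z finite_subset by blast
    show "g ` Z\<beta> \<subseteq> Z" by (auto simp: Z\<beta>_def)
    show "\<forall>a\<in>Z - g ` Z\<beta>. c a * kron r k idm V a (j + (\<beta> - 1) * k) = 0"
    proof
      fix a assume a: "a \<in> Z - g ` Z\<beta>"
      then have "a \<in> {1..n * r}" using Z by auto
      then obtain i \<gamma> where i: "i \<in> {1..r}" "\<gamma> \<in> {1..n}" "a = i + (\<gamma> - 1) * r"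
        by (rule block_index_decompose[OF r])
      moreover have "\<gamma> \<noteq> \<beta>" using a i by (auto simp: Z\<beta>_def g_def)
      ultimately show "c a * kron r k idm V a (j + (\<beta> - 1) * k) = 0"
        using kron_idm_block[of i r j k \<gamma> \<beta> V] j \<beta> by simp
    qed
  qed
  also have "\<dots> = (\<Sum>i\<in>Z\<beta>. c (g i) * kron r k idm V (g i) (j + (\<beta> - 1) * k))"
    by (rule sum.reindex_cong[where l = g]) (simp_all add: g_def inj_on_def)
  also have "\<dots> = (\<Sum>i\<in>Z\<beta>. c (g i) * V i j)"
  proof (rule sum.cong[OF refl])
    fix i assume "i \<in> Z\<beta>"
    then show "c (g i) * kron r k idm V (g i) (j + (\<beta> - 1) * k) = c (g i) * V i j"
      using kron_idm_block[of i r j k \<beta> \<beta> V] j \<beta> by (simp add: Z\<beta>_def g_def)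
  qed
  finally show ?thesis by (simp add: g_def Z\<beta>_def)
qed

lemma nonzero_rows_indep_kron_idm:
  fixes r k n :: nat
  assumes r: "0 < r" and k: "0 < k" and V: "nonzero_rows_indep r k V"
  shows "nonzero_rows_indep (n * r) (n * k) (kron r k idm V)"
  unfolding nonzero_rows_indep_def
proof (intro allI impI)
  fix Z assume Z: "Z \<subseteq> {1..n * r}" and nz: "\<forall>a\<in>Z. \<exists>b\<in>{1..n * k}. kron r k idm V a b \<noteq> 0"
  show "lin_indep_on {1..n * k} Z (kron r k idm V)"
    unfolding lin_indep_on_def
  proof (intro allI impI ballI)
    fix c a0
    assume zero: "\<forall>b\<in>{1..n * k}. (\<Sum>a\<in>Z. c a * kron r k idm V a b) = 0" and a0: "a0 \<in> Z"
    obtain i0 \<beta> where i0: "i0 \<in> {1..r}" "\<beta> \<in> {1..n}" "a0 = i0 + (\<beta> - 1) * r"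
      using block_index_decompose[OF r] a0 Z by blast
    define Z\<beta> where "Z\<beta> = {i \<in> {1..r}. i + (\<beta> - 1) * r \<in> Z}"
    have "\<exists>j\<in>{1..k}. V i j \<noteq> 0" if i: "i \<in> Z\<beta>" for i
    proof -
      obtain b where b: "b \<in> {1..n * k}" "kron r k idm V (i + (\<beta> - 1) * r) b \<noteq> 0"
        using nz i by (auto simp: Z\<beta>_def)
      obtain j \<gamma> where j: "j \<in> {1..k}" "\<gamma> \<in> {1..n}" "b = j + (\<gamma> - 1) * k"
        using block_index_decompose[OF k b(1)] by blast
      show ?thesis
        using b(2) kron_idm_block[of i r j k \<beta> \<gamma> V] i j i0(2) by (auto simp: Z\<beta>_def split: if_splits)
    qed
    moreover have "Z\<beta> \<subseteq> {1..r}" by (auto simp: Z\<beta>_def)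
    ultimately have indep: "lin_indep_on {1..k} Z\<beta> V"
      using V unfolding nonzero_rows_indep_def by blast
    have "(\<Sum>i\<in>Z\<beta>. c (i + (\<beta> - 1) * r) * V i j) = 0" if j: "j \<in> {1..k}" for j
      using zero[rule_format, OF block_index_range[OF j i0(2)]] sum_kron_idm_column[OF r Z j i0(2), of c V]
      by (simp add: Z\<beta>_def)
    then have "\<forall>i\<in>Z\<beta>. c (i + (\<beta> - 1) * r) = 0"
      using indep[unfolded lin_indep_on_def, THEN spec[of _ "\<lambda>i. c (i + (\<beta> - 1) * r)"]] by blast
    then have "c (i0 + (\<beta> - 1) * r) = 0"
      using i0 a0 by (simp add: Z\<beta>_def)
    then show "c a0 = 0" using i0 by simp
  qed
qed

section \<open>The matrices \<open>E\<close>\<close>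

lemma theta_values:
  assumes "0 < nr"
  shows "theta nr 1 = 2 * pi - pi / nr" "theta nr 2 = 2 * pi - 3 * (pi / nr)" "theta nr nr = pi / nr"
  using assms by (simp_all add: theta_def field_simps)

lemma Ebar_e_values:
  fixes nr :: nat
  assumes "3 \<le> nr"
  defines "\<phi> \<equiv> pi / real nr"
  shows "Ebar_e nr l i 1 = 1/3"
    and "Ebar_e nr 1 1 2 = 1/3 + 1/3 * cos \<phi>" "Ebar_e nr 1 nr 2 = 1/3 + 1/3 * cos \<phi>"
    and "Ebar_e nr 2 1 2 = 1/3 - 1/6 * cos \<phi> - sqrt 3 / 6 * sin \<phi>"
    and "Ebar_e nr 3 1 2 = 1/3 - 1/6 * cos \<phi> + sqrt 3 / 6 * sin \<phi>"
    and "Ebar_e nr 2 nr 2 = 1/3 - 1/6 * cos \<phi> + sqrt 3 / 6 * sin \<phi>"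
    and "Ebar_e nr 3 nr 2 = 1/3 - 1/6 * cos \<phi> - sqrt 3 / 6 * sin \<phi>"
    and "Ebar_e nr 2 2 2 = 1/3 - 1/6 * cos (3 * \<phi>) - sqrt 3 / 6 * sin (3 * \<phi>)"
    and "Ebar_e nr 3 2 2 = 1/3 - 1/6 * cos (3 * \<phi>) + sqrt 3 / 6 * sin (3 * \<phi>)"
    and "Ebar_e nr l (nr + 1) 2 = Ebar_e nr l 1 2"
    and "Ebar nr l 1 = 1/3" "Ebar nr l (nr + 1) = Ebar_e nr l 1 2" "Ebar nr l (2 * nr) = Ebar_e nr l nr 2"
  using assms theta_values[of nr] unfolding \<phi>_def
  by (simp_all add: Ebar_def Ebar_e_def Let_def cos_diff sin_diff)

lemma trig_bounds_pi_div:
  fixes nr :: nat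
  assumes "3 \<le> nr"
  defines "\<phi> \<equiv> pi / real nr"
  shows "0 < sin \<phi>" "0 < cos \<phi>" "cos (3 * \<phi>) < cos \<phi>"
proof -
  have "0 < \<phi>" "3 * \<phi> \<le> pi"
    using assms by (simp_all add: \<phi>_def field_simps)
  then show "0 < sin \<phi>" "0 < cos \<phi>" "cos (3 * \<phi>) < cos \<phi>"
    using sin_gt_zero[of \<phi>] cos_gt_zero_pi[of \<phi>] cos_monotone_0_pi[of \<phi> "3 * \<phi>"] pi_gt_zero by auto
qed

lemma lin_indep_on_E10_head:
  assumes nr: "3 \<le> nr" and ns: "2 \<le> ns"
  shows "lin_indep_on {1..nr * ns} {1, 2} (E10 nr ns)"
  unfolding lin_indep_on_def
proof (intro allI impI)
  fix c assume zero: "\<forall>b\<in>{1..nr * ns}. (\<Sum>a\<in>{1, 2}. c a * E10 nr ns a b) = 0"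
  define \<phi> where "\<phi> = pi / real nr"
  have col: "c 1 * (Ebar_e nr 2 (i+1) 2 - Ebar_e nr 2 i 2) + c 2 * (Ebar_e nr 3 (i+1) 2 - Ebar_e nr 3 i 2) = 0"
    if i: "i \<in> {1..nr}" for i
  proof -
    have "nr * 2 \<le> nr * ns" using ns by simp
    then have "nr + i \<le> nr * ns" using i by (simp only: atLeastAtMost_iff) linarith
    then show ?thesis using zero[rule_format, of "nr + i"] i by (simp add: E10_def del: One_nat_def)
  qed
  have cols: "nr \<in> {1..nr}" "1 \<in> {1..nr}" using nr by auto
  define d d3 where "d = sqrt 3 / 6 * sin \<phi>" and "d3 = sqrt 3 / 6 * sin (3 * \<phi>)"
  note vals = Ebar_e_values[OF nr, folded \<phi>_def, folded d_def d3_def]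
  have "(c 2 - c 1) * d = 0"
    using col[OF cols(1)] unfolding vals by algebra
  then have "c 1 = c 2" using trig_bounds_pi_div(1)[OF nr] by (simp add: d_def \<phi>_def)
  moreover have "(c 1 + c 2) * (cos \<phi> - cos (3 * \<phi>)) + 6 * (c 1 - c 2) * (d - d3) = 0"
    using col[OF cols(2)] unfolding one_add_one vals by algebra
  ultimately have "c 2 * (cos \<phi> - cos (3 * \<phi>)) = 0" by simp
  with \<open>c 1 = c 2\<close> show "\<forall>a\<in>{1, 2}. c a = 0"
    using trig_bounds_pi_div(3)[OF nr] by (simp add: \<phi>_def)
qed

lemma lin_indep_on_E01_head:
  assumes nr: "3 \<le> nr" and ns: "2 \<le> ns"
  shows "lin_indep_on {1..nr * (ns - 1)} {1, 2} (E01 nr ns)"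
  unfolding lin_indep_on_def
proof (intro allI impI)
  fix c assume zero: "\<forall>b\<in>{1..nr * (ns - 1)}. (\<Sum>a\<in>{1, 2}. c a * E01 nr ns a b) = 0"
  define \<phi> where "\<phi> = pi / real nr"
  have col: "c 1 * (Ebar_e nr 2 i 2 - Ebar_e nr 2 i 1) + c 2 * (Ebar_e nr 3 i 2 - Ebar_e nr 3 i 1) = 0"
    if i: "i \<in> {1..nr}" for i
  proof -
    have "nr * 1 \<le> nr * (ns - 1)" using ns by (intro mult_le_mono2) simp
    then have "i \<le> nr * (ns - 1)" using i by (simp only: atLeastAtMost_iff) linarith
    then show ?thesis using zero[rule_format, of i] i by (simp add: E01_def del: One_nat_def)
  qed
  have cols: "1 \<in> {1..nr}" "nr \<in> {1..nr}" using nr by auto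
  define d where "d = sqrt 3 / 6 * sin \<phi>"
  note vals = Ebar_e_values[OF nr, folded \<phi>_def, folded d_def]
  have "(c 2 - c 1) * d = 0" "(c 1 + c 2) * cos \<phi> = 0"
    using col[OF cols(1)] col[OF cols(2)] unfolding vals by algebra+
  then show "\<forall>a\<in>{1, 2}. c a = 0"
    using trig_bounds_pi_div(1,2)[OF nr] by (simp add: d_def \<phi>_def)
qed

lemma lin_indep_on_E0_head:
  assumes nr: "3 \<le> nr" and ns: "2 \<le> ns"
  shows "lin_indep_on {1..nr * ns} {1, 2, 3} (E0 nr)"
  unfolding lin_indep_on_def
proof (intro allI impI)
  fix c assume zero: "\<forall>b\<in>{1..nr * ns}. (\<Sum>a\<in>{1, 2, 3}. c a * E0 nr a b) = 0"
  define \<phi> where "\<phi> = pi / real nr"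
  have col: "c 1 * Ebar nr 1 b + c 2 * Ebar nr 2 b + c 3 * Ebar nr 3 b = 0" if b: "b \<in> {1..2 * nr}" for b
  proof -
    have "nr * 2 \<le> nr * ns" using ns by simp
    then have "b \<le> nr * ns" using b by (simp only: atLeastAtMost_iff) linarith
    then show ?thesis using zero[rule_format, of b] b by (simp add: E0_def add.assoc)
  qed
  have cols: "1 \<in> {1..2 * nr}" "nr + 1 \<in> {1..2 * nr}" "2 * nr \<in> {1..2 * nr}" using nr by auto
  define d where "d = sqrt 3 / 6 * sin \<phi>"
  note vals = Ebar_e_values[OF nr, folded \<phi>_def, folded d_def]
  have sum: "c 1 + c 2 + c 3 = 0"
    using col[OF cols(1)] unfolding vals by algebra
  have "(c 3 - c 2) * d = 0"
    using col[OF cols(2)] col[OF cols(3)] unfolding vals by algebra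
  then have "c 2 = c 3" using trig_bounds_pi_div(1)[OF nr] by (simp add: d_def \<phi>_def)
  moreover have "2 * (c 1 + c 2 + c 3) + cos \<phi> * (2 * c 1 - c 2 - c 3) + 6 * d * (c 3 - c 2) = 0"
    using col[OF cols(2)] unfolding vals by algebra
  moreover have "c 1 = - 2 * c 2" using sum \<open>c 2 = c 3\<close> by simp
  ultimately have "c 2 * cos \<phi> = 0" by (simp add: algebra_simps)
  then show "\<forall>a\<in>{1, 2, 3}. c a = 0"
    using trig_bounds_pi_div(2)[OF nr] sum \<open>c 2 = c 3\<close> by (simp add: \<phi>_def)
qed

lemma nonzero_rows_indep_E10:
  assumes nr: "3 \<le> nr" and ns: "2 \<le> ns"
  shows "nonzero_rows_indep (nbar1 nr ns) (nr * ns) (E10 nr ns)"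
proof (rule nonzero_rows_indep_if_disjoint_columns[OF _ lin_indep_on_E10_head[OF nr ns]])
  fix a a' b
  assume a: "a \<in> {1..nbar1 nr ns} - {1, 2}" and nz: "E10 nr ns a b \<noteq> 0" "E10 nr ns a' b \<noteq> 0"
  obtain j i where ji: "3 \<le> j" "1 \<le> i" "i \<le> nr" "a = 2 + i + (2 * j - 5) * nr" "b = i + (j - 1) * nr"
    using a nz(1) by (auto simp: E10_def split: if_splits)
  have "2 * nr \<le> (j - 1) * nr" using ji by (intro mult_le_mono1) simp
  then have "2 * nr < b" using ji(2,5) by linarith
  then have "a' \<notin> {1, 2}" using nz(2) by (auto simp: E10_def)
  then have "\<exists>j' i'. 3 \<le> j' \<and> j' \<le> ns \<and> 1 \<le> i' \<and> i' \<le> nr \<and> a' = 2 + i' + (2 * j' - 5) * nr \<and> b = i' + (j' - 1) * nr"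
    using nz(2) unfolding E10_def by presburger
  then obtain j' i' where ji': "3 \<le> j'" "1 \<le> i'" "i' \<le> nr" "a' = 2 + i' + (2 * j' - 5) * nr" "b = i' + (j' - 1) * nr"
    by blast
  then show "a' = a" using block_index_inj[of i nr i' j j'] ji by auto
qed simp

lemma nonzero_rows_indep_E01:
  assumes nr: "3 \<le> nr" and ns: "2 \<le> ns"
  shows "nonzero_rows_indep (nbar1 nr ns) (nr * (ns - 1)) (E01 nr ns)"
proof (rule nonzero_rows_indep_if_disjoint_columns[OF _ lin_indep_on_E01_head[OF nr ns]])
  fix a a' b
  assume a: "a \<in> {1..nbar1 nr ns} - {1, 2}" and nz: "E01 nr ns a b \<noteq> 0" "E01 nr ns a' b \<noteq> 0"
  obtain j i where ji: "2 \<le> j" "1 \<le> i" "i \<le> nr" "a = 2 + i + (2 * j - 4) * nr" "b = i + (j - 1) * nr"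
    using a nz(1) by (auto simp: E01_def split: if_splits)
  have "1 * nr \<le> (j - 1) * nr" using ji by (intro mult_le_mono1) simp
  then have "nr < b" using ji(2,5) by linarith
  then have "a' \<notin> {1, 2}" using nz(2) by (auto simp: E01_def)
  then have "\<exists>j' i'. 2 \<le> j' \<and> j' \<le> ns - 1 \<and> 1 \<le> i' \<and> i' \<le> nr \<and> a' = 2 + i' + (2 * j' - 4) * nr \<and> b = i' + (j' - 1) * nr"
    using nz(2) unfolding E01_def by presburger
  then obtain j' i' where ji': "2 \<le> j'" "1 \<le> i'" "i' \<le> nr" "a' = 2 + i' + (2 * j' - 4) * nr" "b = i' + (j' - 1) * nr"
    by blast
  then show "a' = a" using block_index_inj[of i nr i' j j'] ji by auto
qed simp

lemma nonzero_rows_indep_E0: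
  assumes nr: "3 \<le> nr" and ns: "2 \<le> ns"
  shows "nonzero_rows_indep (nbar0 nr ns) (nr * ns) (E0 nr)"
proof (rule nonzero_rows_indep_if_disjoint_columns[OF _ lin_indep_on_E0_head[OF nr ns]])
  fix a a' b
  assume a: "a \<in> {1..nbar0 nr ns} - {1, 2, 3}" and nz: "E0 nr a b \<noteq> 0" "E0 nr a' b \<noteq> 0"
  then have "3 < a" "2 * nr < b" "b - 2 * nr = a - 3"
    by (auto simp: E0_def idm_def split: if_splits)
  moreover from this nz(2) have "3 < a'" "b - 2 * nr = a' - 3"
    by (auto simp: E0_def idm_def split: if_splits)
  ultimately show "a' = a" by simp
qed simp

lemma nonzero_rows_indep_E100:
  assumes "3 \<le> nr" "2 \<le> ns"
  shows "nonzero_rows_indep (nt * (nbar1 nr ns + nbar0 nr ns)) (nt * nr * ns) (E100 nr ns)"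
  using nonzero_rows_indep_kron_idm[OF _ _ nonzero_rows_indep_vstack_zero_below[OF nonzero_rows_indep_E10[OF assms]]] assms
  by (simp add: E100_def nbar1_def mult.assoc)

lemma nonzero_rows_indep_E010:
  assumes "3 \<le> nr" "2 \<le> ns"
  shows "nonzero_rows_indep (nt * (nbar1 nr ns + nbar0 nr ns)) (nt * nr * (ns - 1)) (E010 nr ns)"
  using nonzero_rows_indep_kron_idm[OF _ _ nonzero_rows_indep_vstack_zero_below[OF nonzero_rows_indep_E01[OF assms]]] assms
  by (simp add: E010_def nbar1_def mult.assoc)

lemma nonzero_rows_indep_E001:
  assumes "3 \<le> nr" "2 \<le> ns"
  shows "nonzero_rows_indep (nt * (nbar1 nr ns + nbar0 nr ns)) (nt * nr * ns) (E001 nr ns)"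
  using nonzero_rows_indep_kron_idm[OF _ _ nonzero_rows_indep_vstack_zero_above[OF nonzero_rows_indep_E0[OF assms]]] assms
  by (simp add: E001_def nbar0_def mult.assoc)

theorem proposition3p2:
  fixes tr ts tt :: "real list" and pr ps pt mr ns mt :: nat and R S T :: real
  assumes knots_r: "open_C1_knots tr pr mr 0 R"
      and knots_s: "open_C1_knots ts ps ns 0 S"
      and knots_t: "open_C1_knots tt pt mt 0 T"
      and nr_ge: "mr - 2 \<ge> 3"
      and nt_ge: "mt - 2 \<ge> 2"
      and ns_ge: "ns \<ge> 2"
  defines "nr \<equiv> mr - 2"
      and "nt \<equiv> mt - 2"
      and "n1 \<equiv> (mt - 2) * (nbar0 (mr - 2) ns + nbar1 (mr - 2) ns)"
      and "\<Omega> \<equiv> {0..R} \<times> {0..S} \<times> {0..T}"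
  defines "B100 \<equiv> vec3 nr ns (\<lambda>i j k (r, s, t).
              per_D tr pr mr i r * bspl ts ps j s * per_B tt pt mt k t)"
      and "B010 \<equiv> vec3 nr (ns - 1) (\<lambda>i j k (r, s, t).
              per_B tr pr mr i r * dspl ts ps j s * per_B tt pt mt k t)"
      and "B001 \<equiv> vec3 nr ns (\<lambda>i j k (r, s, t).
              per_B tr pr mr i r * bspl ts ps j s * per_D tt pt mt k t)"
  shows "nonzero_lin_indep \<Omega> n1 (matfun (nt * nr * ns) (E100 nr ns) B100)
       \<and> nonzero_lin_indep \<Omega> n1 (matfun (nt * nr * (ns - 1)) (E010 nr ns) B010)
       \<and> nonzero_lin_indep \<Omega> n1 (matfun (nt * nr * ns) (E001 nr ns) B001)"
proof -
  have mr: "3 \<le> mr" and mt: "3 \<le> mt" and nr: "3 \<le> nr" using nr_ge nt_ge by (auto simp: nr_def)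
  have pos: "0 < nr" "0 < ns" "0 < ns - 1" using nr ns_ge by auto
  have n1: "n1 = nt * (nbar1 nr ns + nbar0 nr ns)" by (simp add: n1_def nt_def nr_def add.commute)
  note r = lin_indep_on_per_B[OF knots_r mr, folded nr_def] lin_indep_on_per_D[OF knots_r mr, folded nr_def]
  note s = lin_indep_on_bspl_open[OF knots_s] lin_indep_on_dspl_open[OF knots_s]
  note t = lin_indep_on_per_B[OF knots_t mt, folded nt_def] lin_indep_on_per_D[OF knots_t mt, folded nt_def]
  show ?thesis
    unfolding n1 \<Omega>_def B100_def B010_def B001_def
    using nonzero_lin_indep_matfun[OF lin_indep_on_vec3_tensor[OF pos(1,2) r(2) s(1) t(1)] nonzero_rows_indep_E100[OF nr ns_ge]]
      nonzero_lin_indep_matfun[OF lin_indep_on_vec3_tensor[OF pos(1,3) r(1) s(2) t(1)] nonzero_rows_indep_E010[OF nr ns_ge]]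
      nonzero_lin_indep_matfun[OF lin_indep_on_vec3_tensor[OF pos(1,2) r(1) s(1) t(2)] nonzero_rows_indep_E001[OF nr ns_ge]]
    by simp
qed

end
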